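(* Let $l^{(u)}\in L_u$ for each $u\in U^I_{\min}$. Then $\sum_{u\in U^I_{\min}}l^{(u)}={\bf 0}$ if and only if $l^{(u)}={\bf 0}$ for all $u\in U^I_{\min}$.
   Context: $n\ge1$, $d\ge2$, $I\subseteq\{0,\dots,n\}$; ${\bf a}_1,\dots,{\bf a}_N\in\mathbb{N}^{n+1}$ with coordinate sums $d$, ${\bf a}_j^+=({\bf a}_j,1)\in\mathbb{N}^{n+2}$. $\mu_I$: $\lceil|I|/d\rceil=\mu_I+1$. $U^I_{\min}$: the set of $u\in\mathbb{N}^{n+2}$ with $\sum_{i=0}^nu_i=du_{n+1}$, $u_i>0$ for $i\in I$, and $u_{n+1}=\mu_I+1$. Hypothesis: $N\ge\mu_I+|U^I_{\min}|$ and for each $u\in U^I_{\min}$ there is $k_u$, $1\le k_u\le|U^I_{\min}|$, with $u={\bf a}^+_{\mu_I+k_u}+\sum_{j=1}^{\mu_I}{\bf a}_j^+$. For $u\in U^I_{\min}$, $L_u$ is the set of $l\in\mathbb{Z}^N$ with $\sum_{k=1}^Nl_k{\bf a}_k^+={\bf 0}$, $l_j\le0$ for $j=1,\dots,\mu_I$ and for $j=\mu_I+k_u$, and $l_j\ge0$ for all other $j$. *)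

theory Defs
  imports Complex_Main
begin

text \<open>Vectors in N^(m) / Z^(m) are modelled as functions on nat that vanish outside
  the index range. a j is the vector a_j (j = 1..N, coordinates 0..n).\<close>

definition muI :: "nat \<Rightarrow> nat set \<Rightarrow> int" where
  "muI d I = \<lceil>real (card I) / real d\<rceil> - 1"

definition aplus :: "nat \<Rightarrow> (nat \<Rightarrow> nat \<Rightarrow> nat) \<Rightarrow> nat \<Rightarrow> nat \<Rightarrow> nat" where
  "aplus n a j i = (if i \<le> n then a j i else if i = n + 1 then 1 else 0)"

definition Umin :: "nat \<Rightarrow> nat \<Rightarrow> nat set \<Rightarrow> (nat \<Rightarrow> nat) set" where
  "Umin n d I = {u. (\<forall>i. n + 1 < i \<longrightarrow> u i = 0)
      \<and> (\<Sum>i\<le>n. u i) = d * u (n + 1)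
      \<and> (\<forall>i\<in>I. 0 < u i)
      \<and> int (u (n + 1)) = muI d I + 1}"

definition Lset :: "nat \<Rightarrow> nat \<Rightarrow> (nat \<Rightarrow> nat \<Rightarrow> nat) \<Rightarrow> int \<Rightarrow> nat \<Rightarrow> (nat \<Rightarrow> int) set" where
  "Lset n N a mu ku = {l. (\<forall>j. j \<notin> {1..N} \<longrightarrow> l j = 0)
      \<and> (\<forall>i\<le>n + 1. (\<Sum>j=1..N. l j * int (aplus n a j i)) = 0)
      \<and> (\<forall>j\<in>{1..N}. if int j \<le> mu \<or> int j = mu + int ku then l j \<le> 0 else 0 \<le> l j)}"

end

theory Submission imports Defs begin

text \<open>Write \<open>U\<close> for \<open>U\<^sup>I\<^sub>min\<close> and \<open>p v = \<mu>\<^sub>I + k v\<close>. Every coordinate outside \<open>p ` U\<close> has the same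
  sign in all \<open>l u\<close>, so the vanishing sum kills it. Hence \<open>l u\<close> is given by the coefficients
  \<open>M u v = l u (p v)\<close>, nonnegative for \<open>v \<noteq> u\<close>, with \<open>\<Sum>u. M u v = 0\<close>. The relation
  \<open>\<Sum>j. l u j \<cdot> a\<^sup>+ j = 0\<close> gives \<open>\<Sum>v. M u v = 0\<close> (last coordinate) and, since every \<open>v\<close> is
  \<open>a\<^sup>+ (p v)\<close> plus a fixed vector, \<open>\<Sum>v. M u v \<cdot> v = 0\<close>. Thus
  \<open>T u = \<Sum>v. M u v \<cdot> |v|\<^sup>2 = \<Sum>v. M u v \<cdot> |v - u|\<^sup>2 \<ge> 0\<close>, with equality only if row \<open>u\<close> vanishes,
  the points of \<open>U\<close> being distinct; yet \<open>\<Sum>u. T u = 0\<close> by the column sums.\<close>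

lemma sum_weighted_sq_dist_eq:
  fixes M :: "'a \<Rightarrow> 'b::comm_ring_1" and f :: "'a \<Rightarrow> 'i \<Rightarrow> 'b"
  assumes "finite U" "finite K" "(\<Sum>v\<in>U. M v) = 0" "\<And>i. i \<in> K \<Longrightarrow> (\<Sum>v\<in>U. M v * f v i) = 0"
  shows "(\<Sum>v\<in>U. M v * (\<Sum>i\<in>K. (f v i - c i)^2)) = (\<Sum>v\<in>U. M v * (\<Sum>i\<in>K. (f v i)^2))"
proof -
  have expand: "M v * (\<Sum>i\<in>K. (f v i - c i)^2) = M v * (\<Sum>i\<in>K. (f v i)^2)
      - 2 * (\<Sum>i\<in>K. c i * (M v * f v i)) + (\<Sum>i\<in>K. (c i)^2) * M v" for v
    by (simp add: power2_diff sum.distrib sum_subtractf sum_distrib_left sum_distrib_right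
        algebra_simps)
  have "(\<Sum>v\<in>U. M v * (\<Sum>i\<in>K. (f v i - c i)^2)) = (\<Sum>v\<in>U. M v * (\<Sum>i\<in>K. (f v i)^2))
      - 2 * (\<Sum>i\<in>K. c i * (\<Sum>v\<in>U. M v * f v i)) + (\<Sum>i\<in>K. (c i)^2) * (\<Sum>v\<in>U. M v)"
    unfolding expand sum.distrib sum_subtractf
    by (simp add: sum_distrib_left sum_distrib_right sum.swap[of _ U K])
  also have "\<dots> = (\<Sum>v\<in>U. M v * (\<Sum>i\<in>K. (f v i)^2))"
    using assms by simp
  finally show ?thesis .
qed

text \<open>Centred at \<open>u\<close>, the second moment becomes a sum of nonnegative terms.\<close>

lemma sum_weighted_sq_nonneg_and_eq_0:
  fixes M :: "'a \<Rightarrow> 'b::linordered_idom" and f :: "'a \<Rightarrow> 'i \<Rightarrow> 'b"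
  assumes "finite U" "finite K" "u \<in> U"
    and nonneg: "\<And>v. v \<in> U \<Longrightarrow> v \<noteq> u \<Longrightarrow> 0 \<le> M v"
    and "(\<Sum>v\<in>U. M v) = 0" "\<And>i. i \<in> K \<Longrightarrow> (\<Sum>v\<in>U. M v * f v i) = 0"
    and distinct: "\<And>v. v \<in> U \<Longrightarrow> \<forall>i\<in>K. f v i = f u i \<Longrightarrow> v = u"
  shows "0 \<le> (\<Sum>v\<in>U. M v * (\<Sum>i\<in>K. (f v i)^2))"
    and "(\<Sum>v\<in>U. M v * (\<Sum>i\<in>K. (f v i)^2)) = 0 \<Longrightarrow> v \<in> U \<Longrightarrow> M v = 0"
proof -
  let ?D = "\<lambda>v. M v * (\<Sum>i\<in>K. (f v i - f u i)^2)"
  have centred: "(\<Sum>v\<in>U. ?D v) = (\<Sum>v\<in>U. M v * (\<Sum>i\<in>K. (f v i)^2))"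
    by (rule sum_weighted_sq_dist_eq) (use assms in auto)
  have D_nonneg: "0 \<le> ?D v" if "v \<in> U" for v
    using that nonneg by (cases "v = u") (simp_all add: sum_nonneg)
  then show "0 \<le> (\<Sum>v\<in>U. M v * (\<Sum>i\<in>K. (f v i)^2))"
    unfolding centred[symmetric] by (rule sum_nonneg)
  assume "(\<Sum>v\<in>U. M v * (\<Sum>i\<in>K. (f v i)^2)) = 0"
  then have D_0: "?D v = 0" if "v \<in> U" for v
    using that centred D_nonneg sum_nonneg_eq_0_iff[OF \<open>finite U\<close>, of ?D] by auto
  have off_u: "M w = 0" if w: "w \<in> U" "w \<noteq> u" for w
  proof -
    obtain i where i: "i \<in> K" "f w i \<noteq> f u i"
      using distinct[OF w(1)] w(2) by blast
    have "0 < (f w i - f u i)^2"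
      using i(2) by simp
    also have "\<dots> \<le> (\<Sum>i\<in>K. (f w i - f u i)^2)"
      using i(1) \<open>finite K\<close> by (intro member_le_sum) auto
    finally show ?thesis
      using D_0[OF w(1)] by simp
  qed
  moreover have "M u = 0"
    using \<open>(\<Sum>v\<in>U. M v) = 0\<close> off_u sum.remove[OF \<open>finite U\<close> \<open>u \<in> U\<close>, of M] by simp
  ultimately show "v \<in> U \<Longrightarrow> M v = 0"
    by blast
qed

text \<open>The second moments of the rows are nonnegative and add up to a combination of the
  column sums.\<close>

lemma affine_relations_eq_0:
  fixes M :: "'a \<Rightarrow> 'a \<Rightarrow> 'b::linordered_idom" and f :: "'a \<Rightarrow> 'i \<Rightarrow> 'b"
  assumes "finite U" "finite K"
    and "\<And>u v. u \<in> U \<Longrightarrow> v \<in> U \<Longrightarrow> v \<noteq> u \<Longrightarrow> 0 \<le> M u v"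
    and "\<And>u. u \<in> U \<Longrightarrow> (\<Sum>v\<in>U. M u v) = 0"
    and "\<And>u i. u \<in> U \<Longrightarrow> i \<in> K \<Longrightarrow> (\<Sum>v\<in>U. M u v * f v i) = 0"
    and column_sums: "\<And>v. v \<in> U \<Longrightarrow> (\<Sum>u\<in>U. M u v) = 0"
    and "\<And>u v. u \<in> U \<Longrightarrow> v \<in> U \<Longrightarrow> \<forall>i\<in>K. f v i = f u i \<Longrightarrow> v = u"
    and "u \<in> U" "v \<in> U"
  shows "M u v = 0"
proof -
  let ?Q = "\<lambda>v. \<Sum>i\<in>K. (f v i)^2"
  let ?T = "\<lambda>u. \<Sum>v\<in>U. M u v * ?Q v"
  note row = sum_weighted_sq_nonneg_and_eq_0[OF assms(1,2) _ assms(3) assms(4) assms(5) assms(7)]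
  have T_nonneg: "0 \<le> ?T u" if "u \<in> U" for u
    by (rule row(1)) (use that in auto)
  have "(\<Sum>u\<in>U. ?T u) = (\<Sum>v\<in>U. (\<Sum>u\<in>U. M u v) * ?Q v)"
    unfolding sum_distrib_right by (rule sum.swap)
  also have "\<dots> = 0"
    using column_sums by simp
  finally have "?T u = 0"
    using T_nonneg sum_nonneg_eq_0_iff[OF \<open>finite U\<close>, of ?T] \<open>u \<in> U\<close> by blast
  then show ?thesis
    by (intro row(2)) (use assms(8,9) in auto)
qed

lemma sum_same_sign_eq_0_off_image:
  fixes l :: "'a \<Rightarrow> nat \<Rightarrow> 'b::ordered_ab_group_add"
  assumes "finite U"
    and support: "\<And>u j. u \<in> U \<Longrightarrow> j \<notin> {1..N} \<Longrightarrow> l u j = 0"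
    and nonpos: "\<And>u j. u \<in> U \<Longrightarrow> j \<in> {1..N} \<Longrightarrow> j \<le> m \<or> j = p u \<Longrightarrow> l u j \<le> 0"
    and nonneg: "\<And>u j. u \<in> U \<Longrightarrow> j \<in> {1..N} \<Longrightarrow> \<not> (j \<le> m \<or> j = p u) \<Longrightarrow> 0 \<le> l u j"
    and sum_0: "\<And>j. (\<Sum>u\<in>U. l u j) = 0"
    and "u \<in> U" "j \<notin> p ` U"
  shows "l u j = 0"
proof (cases "j \<in> {1..N}")
  case False
  then show ?thesis
    using support \<open>u \<in> U\<close> by blast
next
  case True
  show ?thesis
  proof (cases "j \<le> m")
    case True
    then have "\<forall>w\<in>U. 0 \<le> - l w j"
      using nonpos \<open>j \<in> {1..N}\<close> by simp
    moreover have "(\<Sum>w\<in>U. - l w j) = 0"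
      by (simp add: sum_negf sum_0)
    ultimately have "- l u j = 0"
      using sum_nonneg_eq_0_iff[OF \<open>finite U\<close>, of "\<lambda>w. - l w j"] \<open>u \<in> U\<close> by blast
    then show ?thesis
      by simp
  next
    case False
    then have "\<forall>w\<in>U. 0 \<le> l w j"
      using nonneg \<open>j \<in> {1..N}\<close> \<open>j \<notin> p ` U\<close> by (metis image_eqI)
    then show ?thesis
      using sum_nonneg_eq_0_iff[OF \<open>finite U\<close>, of "\<lambda>w. l w j"] sum_0 \<open>u \<in> U\<close> by blast
  qed
qed

text \<open>Here \<open>col j\<close> stands for \<open>a\<^sub>j\<^sup>+\<close>, whose last coordinate \<open>i\<^sub>0\<close> is \<open>1\<close>, and \<open>p u = \<mu>\<^sub>I + k\<^sub>u\<close>.\<close>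

lemma sign_pattern_relations_sum_eq_0:
  fixes l :: "'a \<Rightarrow> nat \<Rightarrow> int" and col :: "nat \<Rightarrow> 'i \<Rightarrow> int"
  assumes "finite U" "finite K" "p ` U \<subseteq> {m<..N}"
    and support: "\<And>u j. u \<in> U \<Longrightarrow> j \<notin> {1..N} \<Longrightarrow> l u j = 0"
    and relation: "\<And>u i. u \<in> U \<Longrightarrow> i \<in> K \<Longrightarrow> (\<Sum>j=1..N. l u j * col j i) = 0"
    and "i\<^sub>0 \<in> K" "\<And>j. col j i\<^sub>0 = 1"
    and distinct: "\<And>u v. u \<in> U \<Longrightarrow> v \<in> U \<Longrightarrow> \<forall>i\<in>K. col (p v) i = col (p u) i \<Longrightarrow> v = u"
    and nonpos: "\<And>u j. u \<in> U \<Longrightarrow> j \<in> {1..N} \<Longrightarrow> j \<le> m \<or> j = p u \<Longrightarrow> l u j \<le> 0"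
    and nonneg: "\<And>u j. u \<in> U \<Longrightarrow> j \<in> {1..N} \<Longrightarrow> \<not> (j \<le> m \<or> j = p u) \<Longrightarrow> 0 \<le> l u j"
    and sum_0: "\<And>j. (\<Sum>u\<in>U. l u j) = 0"
    and "u \<in> U"
  shows "l u = (\<lambda>_. 0)"
proof -
  have inj: "inj_on p U"
    using distinct by (intro inj_onI) auto
  have off_image: "l u j = 0" if "u \<in> U" "j \<notin> p ` U" for u j
    using \<open>finite U\<close> support nonpos nonneg sum_0 that by (rule sum_same_sign_eq_0_off_image)
  have reindex: "(\<Sum>j=1..N. l u j * g j) = (\<Sum>v\<in>U. l u (p v) * g (p v))" if "u \<in> U" for u g
  proof -
    have "(\<Sum>j=1..N. l u j * g j) = (\<Sum>j\<in>p ` U. l u j * g j)"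
      using assms(3) off_image[OF that] by (intro sum.mono_neutral_right) auto
    also have "\<dots> = (\<Sum>v\<in>U. l u (p v) * g (p v))"
      by (simp add: sum.reindex[OF inj])
    finally show ?thesis .
  qed
  have on_image: "l u (p v) = 0" if "v \<in> U" for v
  proof (rule affine_relations_eq_0[where M = "\<lambda>u v. l u (p v)" and f = "\<lambda>v. col (p v)"])
    show "0 \<le> l u (p v)" if "u \<in> U" "v \<in> U" "v \<noteq> u" for u v
      using nonneg that assms(3) inj by (force simp: inj_on_def)
    show "(\<Sum>v\<in>U. l u (p v) * col (p v) i) = 0" if "u \<in> U" "i \<in> K" for u i
      using relation[OF that] reindex[OF that(1)] by simp
    then show "(\<Sum>v\<in>U. l u (p v)) = 0" if "u \<in> U" for u
      using that assms(6,7) by fastforce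
  qed (use assms that in auto)
  show ?thesis
  proof
    show "l u j = 0" for j
      using on_image off_image[OF \<open>u \<in> U\<close>, of j] by (cases "j \<in> p ` U") auto
  qed
qed

lemma Umin_vanishes: "u \<in> Umin n d I \<Longrightarrow> n + 1 < i \<Longrightarrow> u i = 0"
  unfolding Umin_def by blast

lemma finite_Umin: "finite (Umin n d I)"
proof -
  define c where "c = nat (muI d I + 1)"
  have "Umin n d I \<subseteq> {u. \<forall>i. (i \<in> {..n+1} \<longrightarrow> u i \<in> {..d * c + c}) \<and> (i \<notin> {..n+1} \<longrightarrow> u i = 0)}"
  proof (intro subsetI CollectI allI conjI impI)
    fix u i assume u: "u \<in> Umin n d I"
    then have sum: "(\<Sum>i\<le>n. u i) = d * c" and top: "u (n + 1) = c"
      unfolding Umin_def c_def by auto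
    show "u i \<in> {..d * c + c}" if "i \<in> {..n+1}"
    proof (cases "i \<le> n")
      case True
      then have "u i \<le> (\<Sum>i\<le>n. u i)"
        by (intro member_le_sum) auto
      then show ?thesis using sum by simp
    qed (use that top in \<open>auto simp: le_Suc_eq\<close>)
    show "u i = 0" if "i \<notin> {..n+1}"
      using Umin_vanishes[OF u] that by simp
  qed
  moreover have "finite {u. \<forall>i. (i \<in> {..n+1} \<longrightarrow> u i \<in> {..d * c + c}) \<and> (i \<notin> {..n+1} \<longrightarrow> u i = (0::nat))}"
    by (rule finite_set_of_finite_funs) auto
  ultimately show ?thesis
    by (rule finite_subset)
qed

lemma muI_nonneg_if_Umin_decomposed:
  assumes "u \<in> Umin n d I"
    and "u (n + 1) = aplus n a q (n + 1) + (\<Sum>j\<in>{1..nat (muI d I)}. aplus n a j (n + 1))"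
  shows "0 \<le> muI d I"
proof -
  have "u (n + 1) = 1 + nat (muI d I)"
    using assms(2) by (simp add: aplus_def)
  moreover have "int (u (n + 1)) = muI d I + 1"
    using assms(1) unfolding Umin_def by blast
  ultimately show ?thesis
    by linarith
qed

lemma Umin_eq_if_columns_eq:
  assumes "u \<in> Umin n d I" "v \<in> Umin n d I"
    and "\<And>i. u i = aplus n a p i + C i" "\<And>i. v i = aplus n a q i + C i"
    and "\<forall>i\<in>{..n+1}. aplus n a p i = aplus n a q i"
  shows "u = v"
proof
  show "u i = v i" for i
    using assms Umin_vanishes[OF assms(1), of i] Umin_vanishes[OF assms(2), of i]
    by (cases "i \<le> n + 1") auto
qed

lemma Lset_eq_if_nonneg:
  assumes "0 \<le> mu"
  shows "Lset n N a mu k = {l. (\<forall>j. j \<notin> {1..N} \<longrightarrow> l j = 0)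
      \<and> (\<forall>i\<le>n + 1. (\<Sum>j=1..N. l j * int (aplus n a j i)) = 0)
      \<and> (\<forall>j\<in>{1..N}. if j \<le> nat mu \<or> j = nat mu + k then l j \<le> 0 else 0 \<le> l j)}"
proof -
  have "(int j \<le> mu \<or> int j = mu + int k) \<longleftrightarrow> (j \<le> nat mu \<or> j = nat mu + k)" for j
    using assms by auto
  then show ?thesis
    unfolding Lset_def by simp
qed

theorem proposition7p7:
  fixes n d N :: nat and I :: "nat set" and a :: "nat \<Rightarrow> nat \<Rightarrow> nat"
    and k :: "(nat \<Rightarrow> nat) \<Rightarrow> nat" and l :: "(nat \<Rightarrow> nat) \<Rightarrow> nat \<Rightarrow> int"
  assumes "n \<ge> 1" and "d \<ge> 2" and "I \<subseteq> {0..n}"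
    and "\<forall>j\<in>{1..N}. (\<Sum>i\<le>n. a j i) = d"
    and "int N \<ge> muI d I + int (card (Umin n d I))"
    and "\<forall>u\<in>Umin n d I. 1 \<le> k u \<and> k u \<le> card (Umin n d I) \<and>
           (\<forall>i. u i = aplus n a (nat (muI d I + int (k u))) i
                     + (\<Sum>j\<in>{1..nat (muI d I)}. aplus n a j i))"
    and "\<forall>u\<in>Umin n d I. l u \<in> Lset n N a (muI d I) (k u)"
  shows "(\<forall>j. (\<Sum>u\<in>Umin n d I. l u j) = 0) \<longleftrightarrow> (\<forall>u\<in>Umin n d I. l u = (\<lambda>j. 0))"
proof
  assume sum_0: "\<forall>j. (\<Sum>u\<in>Umin n d I. l u j) = 0"
  show "\<forall>u\<in>Umin n d I. l u = (\<lambda>j. 0)"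
  proof
    fix u assume u: "u \<in> Umin n d I"
    define m where "m = nat (muI d I)"
    define p where "p v = m + k v" for v
    have mu: "0 \<le> muI d I"
      using assms(6) u by (intro muI_nonneg_if_Umin_decomposed[OF u]) blast
    then have rep: "v i = aplus n a (p v) i + (\<Sum>j\<in>{1..m}. aplus n a j i)" if "v \<in> Umin n d I" for v i
      using assms(6) that unfolding m_def p_def by (simp add: nat_add_distrib)
    have L: "l v \<in> Lset n N a (int m) (k v)" if "v \<in> Umin n d I" for v
      using assms(7) that mu unfolding m_def by simp
    show "l u = (\<lambda>j. 0)"
    proof (rule sign_pattern_relations_sum_eq_0[where l = l and U = "Umin n d I" and K = "{..n+1}"
          and col = "\<lambda>j i. int (aplus n a j i)" and i\<^sub>0 = "n + 1" and p = p and m = m and N = N])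
      show "p ` Umin n d I \<subseteq> {m<..N}"
        using assms(5,6) mu unfolding p_def m_def by force
      show "w = v" if "v \<in> Umin n d I" "w \<in> Umin n d I"
        "\<forall>i\<in>{..n+1}. int (aplus n a (p w) i) = int (aplus n a (p v) i)" for v w
        using that(3) by (intro Umin_eq_if_columns_eq[OF that(2,1) rep rep]) (use that in auto)
    qed (use L u sum_0 finite_Umin in \<open>auto simp: Lset_eq_if_nonneg aplus_def p_def\<close>)
  qed
qed simp

end
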